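(* Let $f$ be analytic on $\mathbb{D}$. Then for every positive integer $n$, \[ \frac{|f^{(n)}(0)|}{n!}\le \frac12\operatorname{Diam} f(\mathbb{D}). \] Moreover, equality holds for some $n$ if and only if $f(z)=f(0)+cz^n$ for some constant $c$ with $|c|=\operatorname{Diam} f(\mathbb{D})/2$.
   Context: $\mathbb{D}$ is the open unit disk; $\operatorname{Diam}E=\sup_{z,w\in E}|z-w|$ (possibly $+\infty$). *)

theory Defs
  imports "HOL-Complex_Analysis.Complex_Analysis" "HOL-Library.Extended_Real"
begin

definition Diam :: "complex set \<Rightarrow> ereal" where
  "Diam E = (SUP z\<in>E. SUP w\<in>E. ereal (cmod (z - w)))"

end

theory Submission
  imports Defs
begin

(*
  Write a_k for the Taylor coefficients of f at 0, d for a bound on |f z - f z'| over the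
  disc (the diameter of its image) and w = e^(i pi/n). For |u|, |v| <= 1 the function
  f(uz) - f(vz) is bounded by d and has coefficients (u^k - v^k) a_k. Dividing out its zero
  of order j at the origin (Schwarz) and applying Wiener's inequality
  d |b_N| <= d^2 - |b_0|^2 for functions bounded by d gives

    d |u^m - v^m| |a_m| <= d^2 - |u^j - v^j|^2 |a_j|^2   if j < m and a_i = 0 for 0 < i < j.

  Wiener's inequality itself is the Schwarz lemma applied to a Moebius transform of the average
  of the function over the N-th roots of unity.

  With u = 1, v = w, j = 0, m = n this reads 2 |a_n| <= d. If 2 |a_n| = d, the same choice with
  j = k < n forces a_k = 0 for 0 < k < n by induction, while u = e^(i delta), v = w, j = n, m = k > n
  give |e^(i k delta) - w^k| |a_k| = O(delta^2); comparing delta with -delta yields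
  |sin (k delta)| |a_k| = O(delta^2), hence a_k = 0.
*)

definition taylor_coeff :: "(complex \<Rightarrow> complex) \<Rightarrow> nat \<Rightarrow> complex" where
  "taylor_coeff h k = (deriv ^^ k) h 0 / fact k"

lemma taylor_coeff_0 [simp]: "taylor_coeff h 0 = h 0"
  by (simp add: taylor_coeff_def)

lemma taylor_coeff_const: "taylor_coeff (\<lambda>z. c) k = (if k = 0 then c else 0)"
  by (simp add: taylor_coeff_def)

lemma taylor_coeff_monomial: "taylor_coeff (\<lambda>z. c * z ^ n) k = (if k = n then c else 0)"
proof -
  have "(\<lambda>z. c * z ^ n) has_fps_expansion fps_const c * fps_X ^ n"
    by (intro has_fps_expansion_cmult_left has_fps_expansion_fps_X_power)
  then have "(fps_const c * fps_X ^ n) $ k = taylor_coeff (\<lambda>z. c * z ^ n) k"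
    unfolding taylor_coeff_def by (rule fps_nth_fps_expansion)
  then show ?thesis
    by (cases "k = n") auto
qed

lemma taylor_coeff_add:
  assumes "f holomorphic_on S" "g holomorphic_on S" "open S" "0 \<in> S"
  shows "taylor_coeff (\<lambda>z. f z + g z) k = taylor_coeff f k + taylor_coeff g k"
  using higher_deriv_add[OF assms, of k] by (simp add: taylor_coeff_def add_divide_distrib)

lemma taylor_coeff_diff:
  assumes "f holomorphic_on S" "g holomorphic_on S" "open S" "0 \<in> S"
  shows "taylor_coeff (\<lambda>z. f z - g z) k = taylor_coeff f k - taylor_coeff g k"
  using higher_deriv_diff[OF assms, of k] by (simp add: taylor_coeff_def diff_divide_distrib)

lemma taylor_coeff_cmult:
  assumes "f holomorphic_on S" "open S" "0 \<in> S"
  shows "taylor_coeff (\<lambda>z. c * f z) k = c * taylor_coeff f k"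
  using higher_deriv_cmult[OF assms(1,3,2), of k c] by (simp add: taylor_coeff_def)

lemma taylor_coeff_sum:
  assumes "finite I" "\<And>i. i \<in> I \<Longrightarrow> h i holomorphic_on S" "open S" "0 \<in> S"
  shows "taylor_coeff (\<lambda>z. \<Sum>i\<in>I. h i z) k = (\<Sum>i\<in>I. taylor_coeff (h i) k)"
  using assms(1,2)
proof (induction I rule: finite_induct)
  case empty
  then show ?case
    by (simp add: taylor_coeff_const)
next
  case (insert i I)
  then have "taylor_coeff (\<lambda>z. h i z + (\<Sum>j\<in>I. h j z)) k
      = taylor_coeff (h i) k + taylor_coeff (\<lambda>z. \<Sum>j\<in>I. h j z) k"
    using assms(3,4) by (intro taylor_coeff_add holomorphic_on_sum) auto
  with insert show ?case
    by simp
qed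

lemma taylor_coeff_const_plus_monomial:
  "taylor_coeff (\<lambda>z. a + c * z ^ n) k = (if k = 0 then a else 0) + (if k = n then c else 0)"
  by (subst taylor_coeff_add[of _ UNIV])
    (auto intro!: holomorphic_intros simp: taylor_coeff_const taylor_coeff_monomial)

lemma taylor_coeff_cong:
  assumes "f holomorphic_on S" "g holomorphic_on S" "open S" "0 \<in> S" "\<And>z. z \<in> S \<Longrightarrow> f z = g z"
  shows "taylor_coeff f k = taylor_coeff g k"
  using higher_deriv_transform_within_open[OF assms] by (simp add: taylor_coeff_def)

lemma eq_if_taylor_coeff_eq:
  assumes "f holomorphic_on S" "g holomorphic_on S" "open S" "connected S" "0 \<in> S"
    and "\<And>k. taylor_coeff f k = taylor_coeff g k" and "z \<in> S"
  shows "f z = g z"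
  using holomorphic_fun_eq_on_connected[OF assms(1-4) _ assms(5,7)] assms(6)
  by (simp add: taylor_coeff_def)

lemma mult_in_unit_ball: "cmod u \<le> 1 \<Longrightarrow> z \<in> ball 0 1 \<Longrightarrow> u * z \<in> ball 0 1"
  by (simp add: norm_mult) (meson le_less_trans mult_left_le_one_le norm_ge_zero)

lemma holomorphic_on_rotate:
  assumes "h holomorphic_on ball 0 1" "cmod u \<le> 1"
  shows "(\<lambda>z. h (u * z)) holomorphic_on ball 0 1"
proof -
  have "(h \<circ> (\<lambda>z. u * z)) holomorphic_on ball 0 1"
    by (rule holomorphic_on_compose_gen[OF _ assms(1)])
      (use mult_in_unit_ball[OF assms(2)] in \<open>auto intro: holomorphic_intros\<close>)
  then show ?thesis
    by (simp add: o_def)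
qed

lemma taylor_coeff_rotate:
  assumes "h holomorphic_on ball 0 1" "cmod u \<le> 1"
  shows "taylor_coeff (\<lambda>z. h (u * z)) k = u ^ k * taylor_coeff h k"
proof -
  have "(deriv ^^ k) (\<lambda>z. h (u * z)) 0 = u ^ k * (deriv ^^ k) h (u * 0)"
    by (rule higher_deriv_compose_linear[OF assms(1), where S = "ball 0 1"])
      (use mult_in_unit_ball[OF assms(2)] in auto)
  then show ?thesis
    by (simp add: taylor_coeff_def)
qed

lemma holomorphic_factor_power:
  assumes hol: "h holomorphic_on ball 0 1" and vanish: "\<And>i. i < N \<Longrightarrow> taylor_coeff h i = 0"
  obtains \<rho> where "\<rho> holomorphic_on ball 0 1" "\<And>z. z \<in> ball 0 1 \<Longrightarrow> h z = z ^ N * \<rho> z"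
    "\<And>i. taylor_coeff \<rho> i = taylor_coeff h (i + N)"
proof -
  define F where "F = fps_expansion h 0"
  define G where "G = fps_shift N F"
  have F_nth: "F $ k = taylor_coeff h k" for k
    by (simp add: F_def fps_expansion_def taylor_coeff_def)
  have "fps_conv_radius F \<ge> ereal 1"
    unfolding F_def by (rule conv_radius_fps_expansion) (use hol in simp)
  then have radius: "fps_conv_radius G \<ge> ereal 1"
    by (simp add: G_def)
  have F_eq: "F = G * fps_X ^ N"
    by (rule fps_ext) (auto simp: G_def fps_X_power_mult_right_nth F_nth vanish)
  have in_radius: "ereal (cmod z) < fps_conv_radius G" if "z \<in> ball 0 1" for z
    by (rule order.strict_trans2[OF _ radius]) (use that in simp)
  show ?thesis
  proof
    show "eval_fps G holomorphic_on ball 0 1"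
      using in_radius by (intro holomorphic_on_eval_fps) auto
    fix z :: complex assume z: "z \<in> ball 0 1"
    have "h z = eval_fps F z"
      using eval_fps_expansion'[where f = h and r = "ereal 1" and z = z] hol z by (simp add: F_def)
    also have "\<dots> = z ^ N * eval_fps G z"
      unfolding F_eq using in_radius[OF z] by (subst eval_fps_mult) (auto simp: mult.commute)
    finally show "h z = z ^ N * eval_fps G z" .
  next
    fix i
    have "0 < fps_conv_radius G"
      by (rule order.strict_trans2[OF _ radius]) simp
    then have "G $ i = taylor_coeff (eval_fps G) i"
      unfolding taylor_coeff_def by (intro fps_nth_fps_expansion eval_fps_has_fps_expansion)
    then show "taylor_coeff (eval_fps G) i = taylor_coeff h (i + N)"
      by (simp add: G_def F_nth)
  qed
qed

lemma le_if_mult_power_le_near_1: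
  fixes x M a :: real
  assumes "a < 1" and le: "\<And>r. a < r \<Longrightarrow> r < 1 \<Longrightarrow> x * r ^ N \<le> M"
  shows "x \<le> M"
proof -
  have "((\<lambda>r. x * r ^ N) \<longlongrightarrow> x * 1 ^ N) (at_left 1)"
    by (intro tendsto_intros)
  moreover have "eventually (\<lambda>r. x * r ^ N \<le> M) (at_left 1)"
    using eventually_at_left_real[OF \<open>a < 1\<close>] eventually_at_left_real[OF zero_less_one]
    by eventually_elim (use le in auto)
  ultimately have "x * 1 ^ N \<le> M"
    by (intro tendsto_upperbound) (auto simp: trivial_limit_at_left_real)
  then show ?thesis
    by simp
qed

lemma Schwarz_power_bound:
  assumes hol: "s holomorphic_on ball 0 1"
    and bound: "\<And>z. z \<in> ball 0 1 \<Longrightarrow> cmod (z ^ N * s z) \<le> M" and "\<xi> \<in> ball 0 1"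
  shows "cmod (s \<xi>) \<le> M"
proof (rule le_if_mult_power_le_near_1)
  show "cmod \<xi> < 1"
    using \<open>\<xi> \<in> ball 0 1\<close> by simp
  fix r :: real assume r: "cmod \<xi> < r" "r < 1"
  then have "0 < r"
    by (meson le_less_trans norm_ge_zero)
  have "cmod (s \<xi>) \<le> M / r ^ N"
  proof (rule maximum_modulus_frontier[of s "cball 0 r"])
    show "s holomorphic_on interior (cball 0 r)" "continuous_on (closure (cball 0 r)) s"
      using r by (auto intro!: holomorphic_on_imp_continuous_on intro: holomorphic_on_subset[OF hol])
    show "\<xi> \<in> cball 0 r"
      using r by simp
    fix z :: complex assume "z \<in> frontier (cball 0 r)"
    then have z: "cmod z = r"
      using \<open>0 < r\<close> by (simp add: frontier_cball)
    then have "r ^ N * cmod (s z) \<le> M"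
      using bound[of z] r by (simp add: norm_mult norm_power)
    then show "cmod (s z) \<le> M / r ^ N"
      using \<open>0 < r\<close> by (simp add: field_simps mult.commute)
  qed simp
  then show "cmod (s \<xi>) * r ^ N \<le> M"
    using \<open>0 < r\<close> by (simp add: field_simps)
qed

lemma norm_diff_le_norm_Mobius:
  fixes w A :: complex and d :: real
  assumes w: "cmod w \<le> d" and A: "cmod A \<le> d"
  shows "d * cmod (w - A) \<le> cmod (of_real (d\<^sup>2) - cnj A * w)"
proof (rule power2_le_imp_le)
  have "(cmod (of_real (d\<^sup>2) - cnj A * w))\<^sup>2 - (d * cmod (w - A))\<^sup>2
      = (d\<^sup>2 - (cmod w)\<^sup>2) * (d\<^sup>2 - (cmod A)\<^sup>2)"
    by (simp add: cmod_power2 power_mult_distrib) (simp add: power2_eq_square algebra_simps)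
  also have "\<dots> \<ge> 0"
    using w A by (intro mult_nonneg_nonneg) (auto simp: abs_le_square_iff intro: power_mono)
  finally show "(d * cmod (w - A))\<^sup>2 \<le> (cmod (of_real (d\<^sup>2) - cnj A * w))\<^sup>2"
    by simp
qed simp

lemma norm_Mobius_le_1:
  fixes w A :: complex and d :: real
  assumes w: "cmod w \<le> d" and A: "cmod A < d"
  shows Mobius_denominator_nonzero: "of_real (d\<^sup>2) - cnj A * w \<noteq> 0"
    and "cmod (of_real d * (w - A) / (of_real (d\<^sup>2) - cnj A * w)) \<le> 1"
proof -
  have "0 < d"
    using A by (meson le_less_trans norm_ge_zero)
  have le: "d * cmod (w - A) \<le> cmod (of_real (d\<^sup>2) - cnj A * w)"
    using norm_diff_le_norm_Mobius[OF w] A by simp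
  show denom: "of_real (d\<^sup>2) - cnj A * w \<noteq> 0"
  proof
    assume denom_0: "of_real (d\<^sup>2) - cnj A * w = 0"
    then have "w = A"
      using le \<open>0 < d\<close> by (simp add: mult_le_0_iff)
    with denom_0 have "(cmod A)\<^sup>2 = d\<^sup>2"
      by (metis complex_norm_square mult.commute of_real_eq_iff of_real_power eq_iff_diff_eq_0)
    then show False
      using A \<open>0 < d\<close> power2_eq_imp_eq[of "cmod A" d] by simp
  qed
  show "cmod (of_real d * (w - A) / (of_real (d\<^sup>2) - cnj A * w)) \<le> 1"
    using le denom \<open>0 < d\<close> by (simp add: norm_mult norm_divide divide_le_eq_1)
qed

lemma Wiener_inequality_gap:
  assumes hol: "\<phi> holomorphic_on ball 0 1" and bound: "\<And>z. z \<in> ball 0 1 \<Longrightarrow> cmod (\<phi> z) \<le> d"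
    and inside: "cmod (\<phi> 0) < d" and "1 \<le> N"
    and gap: "\<And>i. 0 < i \<Longrightarrow> i < N \<Longrightarrow> taylor_coeff \<phi> i = 0"
  shows "d * cmod (taylor_coeff \<phi> N) \<le> d\<^sup>2 - (cmod (\<phi> 0))\<^sup>2"
proof -
  define A where "A = \<phi> 0"
  have "0 < d"
    using inside by (meson le_less_trans norm_ge_zero)
  have coeff_shift: "taylor_coeff (\<lambda>z. \<phi> z - A) i = taylor_coeff \<phi> i - (if i = 0 then A else 0)" for i
    using taylor_coeff_diff[of \<phi> "ball 0 1" "\<lambda>_. A"] hol by (simp add: taylor_coeff_const)
  obtain \<rho> where hol_\<rho>: "\<rho> holomorphic_on ball 0 1"
    and factor: "\<And>z. z \<in> ball 0 1 \<Longrightarrow> \<phi> z - A = z ^ N * \<rho> z"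
    and coeff_\<rho>: "\<And>i. taylor_coeff \<rho> i = taylor_coeff (\<lambda>z. \<phi> z - A) (i + N)"
    by (rule holomorphic_factor_power[of "\<lambda>z. \<phi> z - A" N])
      (auto intro!: holomorphic_intros hol simp: coeff_shift gap A_def[symmetric])
  have \<rho>_0: "\<rho> 0 = taylor_coeff \<phi> N"
    using coeff_\<rho>[of 0] coeff_shift[of N] \<open>1 \<le> N\<close> by simp
  have A_inside: "cmod A < d"
    using inside by (simp add: A_def)
  define \<sigma> where "\<sigma> z = of_real d * \<rho> z / (of_real (d\<^sup>2) - cnj A * \<phi> z)" for z
  have "cmod (\<sigma> 0) \<le> 1"
  proof (rule Schwarz_power_bound[where s = \<sigma> and N = N])
    show "\<sigma> holomorphic_on ball 0 1"
      unfolding \<sigma>_def using Mobius_denominator_nonzero[OF bound A_inside]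
      by (intro holomorphic_intros hol hol_\<rho>) auto
    fix z :: complex assume z: "z \<in> ball 0 1"
    have "z ^ N * \<sigma> z = of_real d * (\<phi> z - A) / (of_real (d\<^sup>2) - cnj A * \<phi> z)"
      by (simp add: \<sigma>_def factor[OF z])
    then show "cmod (z ^ N * \<sigma> z) \<le> 1"
      using norm_Mobius_le_1(2)[OF bound[OF z] A_inside] by simp
  qed simp
  moreover have A_less: "(cmod A)\<^sup>2 < d\<^sup>2"
    using A_inside by (simp add: power_strict_mono)
  moreover have "cmod (\<sigma> 0) = d * cmod (taylor_coeff \<phi> N) / (d\<^sup>2 - (cmod A)\<^sup>2)"
  proof -
    have "cnj A * A = of_real ((cmod A)\<^sup>2)"
      by (metis complex_norm_square mult.commute of_real_power)
    then have \<sigma>_0: "\<sigma> 0 = of_real d * taylor_coeff \<phi> N / of_real (d\<^sup>2 - (cmod A)\<^sup>2)"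
      by (simp add: \<sigma>_def \<rho>_0 A_def[symmetric])
    show ?thesis
      unfolding \<sigma>_0 norm_divide norm_mult norm_of_real using \<open>0 < d\<close> A_less by (simp add: abs_of_pos)
  qed
  ultimately show ?thesis
    by (simp add: A_def divide_le_eq)
qed

lemma cis_2pi_div_power_eq_1_iff:
  fixes n k :: nat
  assumes "1 \<le> n"
  shows "cis (2 * pi / n) ^ k = 1 \<longleftrightarrow> n dvd k"
proof -
  have "cis (2 * pi / n) ^ k = exp (2 * of_real pi * \<i> * of_nat k / of_nat n)"
    by (subst Complex.DeMoivre) (simp add: cis_conv_exp field_simps)
  then show ?thesis
    using complex_root_unity_eq_1[OF assms] by simp
qed

lemma taylor_coeff_sum_rotations:
  assumes hol: "h holomorphic_on ball 0 1" and "cmod \<zeta> \<le> 1"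
  shows "taylor_coeff (\<lambda>z. \<Sum>j<N. h (\<zeta> ^ j * z)) k = (\<Sum>j<N. (\<zeta> ^ k) ^ j) * taylor_coeff h k"
proof -
  have norm_power: "cmod (\<zeta> ^ j) \<le> 1" for j
    using \<open>cmod \<zeta> \<le> 1\<close> by (simp add: norm_power power_le_one)
  have "taylor_coeff (\<lambda>z. \<Sum>j<N. h (\<zeta> ^ j * z)) k = (\<Sum>j<N. taylor_coeff (\<lambda>z. h (\<zeta> ^ j * z)) k)"
    by (rule taylor_coeff_sum) (auto intro: holomorphic_on_rotate[OF hol norm_power])
  also have "\<dots> = (\<Sum>j<N. (\<zeta> ^ k) ^ j * taylor_coeff h k)"
    by (intro sum.cong refl) (metis taylor_coeff_rotate[OF hol norm_power] power_mult mult.commute)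
  finally show ?thesis
    by (simp add: sum_distrib_right)
qed

lemma rotation_average:
  assumes hol: "\<phi> holomorphic_on ball 0 1" and bound: "\<And>z. z \<in> ball 0 1 \<Longrightarrow> cmod (\<phi> z) \<le> d"
    and "1 \<le> N"
  obtains \<psi> where "\<psi> holomorphic_on ball 0 1" "\<And>z. z \<in> ball 0 1 \<Longrightarrow> cmod (\<psi> z) \<le> d"
    "\<psi> 0 = \<phi> 0" "taylor_coeff \<psi> N = taylor_coeff \<phi> N"
    "\<And>i. 0 < i \<Longrightarrow> i < N \<Longrightarrow> taylor_coeff \<psi> i = 0"
proof
  define \<zeta> where "\<zeta> = cis (2 * pi / N)"
  have norm_\<zeta>: "cmod (\<zeta> ^ j) \<le> 1" for j
    by (simp add: \<zeta>_def norm_power)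
  have hol_rotated: "(\<lambda>z. \<phi> (\<zeta> ^ j * z)) holomorphic_on ball 0 1" for j
    by (rule holomorphic_on_rotate[OF hol norm_\<zeta>])
  define \<psi> where "\<psi> z = (1 / of_nat N) * (\<Sum>j<N. \<phi> (\<zeta> ^ j * z))" for z
  show "\<psi> holomorphic_on ball 0 1"
    unfolding \<psi>_def by (intro holomorphic_intros hol_rotated)
  show "cmod (\<psi> z) \<le> d" if "z \<in> ball 0 1" for z
  proof -
    have "cmod (\<Sum>j<N. \<phi> (\<zeta> ^ j * z)) \<le> (\<Sum>j<N. d)"
      by (rule sum_norm_le) (use bound mult_in_unit_ball[OF norm_\<zeta> that] in auto)
    then show ?thesis
      using \<open>1 \<le> N\<close> by (simp add: \<psi>_def norm_mult norm_divide field_simps)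
  qed
  show "\<psi> 0 = \<phi> 0"
    using \<open>1 \<le> N\<close> by (simp add: \<psi>_def)
  have coeff_\<psi>: "taylor_coeff \<psi> k = (1 / of_nat N) * ((\<Sum>j<N. (\<zeta> ^ k) ^ j) * taylor_coeff \<phi> k)" for k
    unfolding \<psi>_def taylor_coeff_sum_rotations[OF hol norm_\<zeta>[of 1, simplified], symmetric]
    by (rule taylor_coeff_cmult) (auto intro: holomorphic_on_sum hol_rotated)
  have \<zeta>_power: "(\<zeta> ^ k) ^ N = 1" for k
    using cis_2pi_div_power_eq_1_iff[OF \<open>1 \<le> N\<close>, of "N * k"]
    by (simp add: \<zeta>_def power_mult[symmetric] mult.commute)
  show "taylor_coeff \<psi> N = taylor_coeff \<phi> N"
    using \<zeta>_power[of 1] \<open>1 \<le> N\<close> by (simp add: coeff_\<psi>)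
  show "taylor_coeff \<psi> i = 0" if "0 < i" "i < N" for i
  proof -
    have "\<zeta> ^ i \<noteq> 1"
      using cis_2pi_div_power_eq_1_iff[OF \<open>1 \<le> N\<close>, of i] that by (auto simp: \<zeta>_def dest: dvd_imp_le)
    then have "(\<Sum>j<N. (\<zeta> ^ i) ^ j) = 0"
      using \<zeta>_power[of i] by (simp add: geometric_sum)
    then show ?thesis
      by (simp add: coeff_\<psi>)
  qed
qed

lemma Wiener_inequality:
  assumes hol: "\<phi> holomorphic_on ball 0 1" and bound: "\<And>z. z \<in> ball 0 1 \<Longrightarrow> cmod (\<phi> z) \<le> d"
    and "1 \<le> N"
  shows "d * cmod (taylor_coeff \<phi> N) \<le> d\<^sup>2 - (cmod (\<phi> 0))\<^sup>2"
proof (cases "cmod (\<phi> 0) < d")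
  case True
  obtain \<psi> where hol_\<psi>: "\<psi> holomorphic_on ball 0 1"
    and bound_\<psi>: "\<And>z. z \<in> ball 0 1 \<Longrightarrow> cmod (\<psi> z) \<le> d"
    and \<psi>_0: "\<psi> 0 = \<phi> 0" and \<psi>_N: "taylor_coeff \<psi> N = taylor_coeff \<phi> N"
    and gap_\<psi>: "\<And>i. 0 < i \<Longrightarrow> i < N \<Longrightarrow> taylor_coeff \<psi> i = 0"
    using rotation_average[of \<phi> d N] hol bound \<open>1 \<le> N\<close> by blast
  have "cmod (\<psi> 0) < d"
    using True by (simp add: \<psi>_0)
  from Wiener_inequality_gap[OF hol_\<psi> bound_\<psi> this \<open>1 \<le> N\<close> gap_\<psi>] show ?thesis
    by (simp only: \<psi>_0 \<psi>_N)
next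
  case False
  then have max: "cmod (\<phi> 0) = d"
    using bound[of 0] by simp
  have "\<phi> constant_on ball 0 1"
    by (rule maximum_modulus_principle[of \<phi> "ball 0 1" "ball 0 1" 0])
      (use hol bound[unfolded max[symmetric]] in auto)
  then obtain c where const: "\<And>z. z \<in> ball 0 1 \<Longrightarrow> \<phi> z = c"
    by (auto simp: constant_on_def)
  then have "taylor_coeff \<phi> N = taylor_coeff (\<lambda>_. c) N"
    by (intro taylor_coeff_cong[OF hol]) auto
  with max const[of 0] \<open>1 \<le> N\<close> show ?thesis
    by (simp add: taylor_coeff_const)
qed

lemma Wiener_inequality_vanishing_order:
  assumes hol: "\<phi> holomorphic_on ball 0 1" and bound: "\<And>z. z \<in> ball 0 1 \<Longrightarrow> cmod (\<phi> z) \<le> d"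
    and vanish: "\<And>i. i < j \<Longrightarrow> taylor_coeff \<phi> i = 0" and "j < m"
  shows "d * cmod (taylor_coeff \<phi> m) \<le> d\<^sup>2 - (cmod (taylor_coeff \<phi> j))\<^sup>2"
proof -
  obtain \<rho> where hol_\<rho>: "\<rho> holomorphic_on ball 0 1"
    and factor: "\<And>z. z \<in> ball 0 1 \<Longrightarrow> \<phi> z = z ^ j * \<rho> z"
    and coeff_\<rho>: "\<And>i. taylor_coeff \<rho> i = taylor_coeff \<phi> (i + j)"
    using holomorphic_factor_power[of \<phi> j] hol vanish by blast
  have "cmod (\<rho> z) \<le> d" if "z \<in> ball 0 1" for z
    by (rule Schwarz_power_bound[OF hol_\<rho> _ that, of j]) (use factor bound in auto)
  from Wiener_inequality[OF hol_\<rho> this, of "m - j"] \<open>j < m\<close> show ?thesis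
    using coeff_\<rho>[of 0] coeff_\<rho>[of "m - j"] by simp
qed

lemma taylor_coeff_rotation_diff:
  assumes "f holomorphic_on ball 0 1" "cmod u \<le> 1" "cmod v \<le> 1"
  shows "taylor_coeff (\<lambda>z. f (u * z) - f (v * z)) k = (u ^ k - v ^ k) * taylor_coeff f k"
proof -
  have "taylor_coeff (\<lambda>z. f (u * z) - f (v * z)) k
      = taylor_coeff (\<lambda>z. f (u * z)) k - taylor_coeff (\<lambda>z. f (v * z)) k"
    by (rule taylor_coeff_diff) (auto intro: holomorphic_on_rotate assms)
  then show ?thesis
    by (simp add: taylor_coeff_rotate assms left_diff_distrib)
qed

lemma Wiener_inequality_rotation_diff:
  assumes hol: "f holomorphic_on ball 0 1"
    and osc: "\<And>z w. z \<in> ball 0 1 \<Longrightarrow> w \<in> ball 0 1 \<Longrightarrow> cmod (f z - f w) \<le> d"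
    and u: "cmod u \<le> 1" and v: "cmod v \<le> 1" and "j < m"
    and gap: "\<And>i. 0 < i \<Longrightarrow> i < j \<Longrightarrow> taylor_coeff f i = 0"
  shows "d * (cmod (u ^ m - v ^ m) * cmod (taylor_coeff f m))
      \<le> d\<^sup>2 - (cmod (u ^ j - v ^ j) * cmod (taylor_coeff f j))\<^sup>2"
proof -
  define \<Psi> where "\<Psi> z = f (u * z) - f (v * z)" for z
  have coeff_\<Psi>: "taylor_coeff \<Psi> k = (u ^ k - v ^ k) * taylor_coeff f k" for k
    unfolding \<Psi>_def using taylor_coeff_rotation_diff[OF hol u v] .
  have "d * cmod (taylor_coeff \<Psi> m) \<le> d\<^sup>2 - (cmod (taylor_coeff \<Psi> j))\<^sup>2"
  proof (rule Wiener_inequality_vanishing_order[OF _ _ _ \<open>j < m\<close>])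
    show "\<Psi> holomorphic_on ball 0 1"
      unfolding \<Psi>_def by (intro holomorphic_intros holomorphic_on_rotate hol u v)
    show "cmod (\<Psi> z) \<le> d" if "z \<in> ball 0 1" for z
      unfolding \<Psi>_def by (intro osc mult_in_unit_ball u v that)
    show "taylor_coeff \<Psi> i = 0" if "i < j" for i
      using gap[of i] that by (cases "i = 0") (auto simp: coeff_\<Psi> \<Psi>_def)
  qed
  then show ?thesis
    by (simp add: coeff_\<Psi> norm_mult)
qed

lemma cis_pi_div_power_self:
  fixes n :: nat
  assumes "1 \<le> n"
  shows "cis (pi / n) ^ n = -1"
  using assms by (simp add: Complex.DeMoivre)

lemma cis_pi_div_power_ne_1:
  fixes n k :: nat
  assumes "0 < k" "k < n"
  shows "cis (pi / n) ^ k \<noteq> 1"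
  using cis_2pi_div_power_eq_1_iff[of "2 * n" k] assms by (auto dest: dvd_imp_le)

lemma norm_cis_plus_1_squared: "(cmod (cis t + 1))\<^sup>2 = 2 + 2 * cos t"
  using sin_cos_squared_add[of t] by (simp add: cmod_power2) (simp add: power2_eq_square algebra_simps)

lemma norm_cis_diff_cis_minus: "cmod (cis t - cis (- t)) = 2 * \<bar>sin t\<bar>"
proof -
  have "cis t - cis (- t) = of_real (2 * sin t) * \<i>"
    by (simp add: complex_eq_iff)
  then show ?thesis
    by (simp add: norm_mult)
qed

lemma one_minus_cos_le: "1 - cos t \<le> (t::real)\<^sup>2 / 2"
proof -
  have "(sin (t / 2))\<^sup>2 \<le> (t / 2)\<^sup>2"
    using abs_sin_x_le_abs_x[of "t / 2"] by (metis abs_ge_zero power2_abs power_mono)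
  then show ?thesis
    using cos_double_sin[of "t / 2"] by (simp add: power_divide)
qed

lemma eq_0_if_abs_sin_le_square:
  fixes k x C :: real
  assumes "0 < k" "0 \<le> x" and le: "\<And>\<delta>. \<bar>sin (k * \<delta>)\<bar> * x \<le> C * \<delta>\<^sup>2"
  shows "x = 0"
proof -
  have "((\<lambda>\<delta>. sin (k * \<delta>)) has_real_derivative k) (at 0)"
    by (auto intro!: derivative_eq_intros)
  then have "((\<lambda>\<delta>. sin (k * \<delta>) / \<delta>) \<longlongrightarrow> k) (at 0)"
    by (simp add: DERIV_def)
  then have "((\<lambda>\<delta>. \<bar>sin (k * \<delta>) / \<delta>\<bar> * x) \<longlongrightarrow> \<bar>k\<bar> * x) (at 0)"
    by (intro tendsto_intros)
  moreover have "((\<lambda>\<delta>. \<bar>C\<bar> * \<bar>\<delta>\<bar>) \<longlongrightarrow> \<bar>C\<bar> * \<bar>0\<bar>) (at (0::real))"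
    by (intro tendsto_intros)
  moreover have "eventually (\<lambda>\<delta>. \<bar>sin (k * \<delta>) / \<delta>\<bar> * x \<le> \<bar>C\<bar> * \<bar>\<delta>\<bar>) (at 0)"
  proof (rule eventually_mono[OF eventually_neq_at_within[of 0]])
    fix \<delta> :: real assume "\<delta> \<noteq> 0"
    have "\<bar>sin (k * \<delta>) / \<delta>\<bar> * x = \<bar>sin (k * \<delta>)\<bar> * x / \<bar>\<delta>\<bar>"
      by (simp add: abs_divide)
    also have "\<dots> \<le> C * \<delta>\<^sup>2 / \<bar>\<delta>\<bar>"
      using le[of \<delta>] by (simp add: divide_right_mono)
    also have "\<dots> = C * \<bar>\<delta>\<bar>"
      using \<open>\<delta> \<noteq> 0\<close> by (simp add: power2_eq_square abs_if)
    also have "\<dots> \<le> \<bar>C\<bar> * \<bar>\<delta>\<bar>"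
      by (simp add: mult_right_mono)
    finally show "\<bar>sin (k * \<delta>) / \<delta>\<bar> * x \<le> \<bar>C\<bar> * \<bar>\<delta>\<bar>" .
  qed
  ultimately have "\<bar>k\<bar> * x \<le> \<bar>C\<bar> * \<bar>0\<bar>"
    by (intro tendsto_le[of "at 0"]) auto
  then show ?thesis
    using assms(1,2) by (simp add: mult_le_0_iff)
qed

lemma eq_0_if_norm_cis_diff_le_square:
  fixes k x C :: real and \<mu> :: complex
  assumes "0 < k" "0 \<le> x" and le: "\<And>\<delta>. cmod (cis (k * \<delta>) - \<mu>) * x \<le> C * \<delta>\<^sup>2"
  shows "x = 0"
proof (rule eq_0_if_abs_sin_le_square[OF assms(1,2)])
  fix \<delta> :: real
  have "2 * \<bar>sin (k * \<delta>)\<bar> = cmod ((cis (k * \<delta>) - \<mu>) - (cis (k * - \<delta>) - \<mu>))"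
    using norm_cis_diff_cis_minus[of "k * \<delta>"] by simp
  also have "\<dots> \<le> cmod (cis (k * \<delta>) - \<mu>) + cmod (cis (k * - \<delta>) - \<mu>)"
    by (rule norm_triangle_ineq4)
  finally have "2 * \<bar>sin (k * \<delta>)\<bar> * x
      \<le> cmod (cis (k * \<delta>) - \<mu>) * x + cmod (cis (k * - \<delta>) - \<mu>) * x"
    using \<open>0 \<le> x\<close> by (metis distrib_right mult_right_mono)
  with le[of \<delta>] le[of "- \<delta>"] show "\<bar>sin (k * \<delta>)\<bar> * x \<le> C * \<delta>\<^sup>2"
    by simp
qed

lemma norm_taylor_coeff_le_half_oscillation:
  assumes hol: "f holomorphic_on ball 0 1"
    and osc: "\<And>z w. z \<in> ball 0 1 \<Longrightarrow> w \<in> ball 0 1 \<Longrightarrow> cmod (f z - f w) \<le> d"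
    and "1 \<le> n"
  shows "2 * cmod (taylor_coeff f n) \<le> d"
proof (cases "d = 0")
  case True
  then have const: "f z = f 0" if "z \<in> ball 0 1" for z
    using osc[OF that, of 0] by simp
  have "taylor_coeff f n = taylor_coeff (\<lambda>_. f 0) n"
    by (rule taylor_coeff_cong[OF hol holomorphic_on_const open_ball _ const]) simp
  with True \<open>1 \<le> n\<close> show ?thesis
    by (simp add: taylor_coeff_const)
next
  case False
  with osc[of 0 0] have "0 < d"
    by simp
  define \<omega> where "\<omega> = cis (pi / n)"
  have "d * (cmod (1 ^ n - \<omega> ^ n) * cmod (taylor_coeff f n))
      \<le> d\<^sup>2 - (cmod (1 ^ 0 - \<omega> ^ 0) * cmod (taylor_coeff f 0))\<^sup>2"
    by (rule Wiener_inequality_rotation_diff[OF hol osc]) (use \<open>1 \<le> n\<close> in \<open>auto simp: \<omega>_def\<close>)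
  then have "d * (2 * cmod (taylor_coeff f n)) \<le> d * d"
    using cis_pi_div_power_self[OF \<open>1 \<le> n\<close>] by (simp add: \<omega>_def power2_eq_square)
  with \<open>0 < d\<close> show ?thesis
    by simp
qed

lemma taylor_coeff_eq_0_below_if_extremal:
  assumes hol: "f holomorphic_on ball 0 1"
    and osc: "\<And>z w. z \<in> ball 0 1 \<Longrightarrow> w \<in> ball 0 1 \<Longrightarrow> cmod (f z - f w) \<le> d"
    and extremal: "2 * cmod (taylor_coeff f n) = d" and "0 < d" and "0 < k" "k < n"
  shows "taylor_coeff f k = 0"
  using \<open>0 < k\<close> \<open>k < n\<close>
proof (induction k rule: less_induct)
  case (less k)
  define \<omega> where "\<omega> = cis (pi / n)"
  have gap: "taylor_coeff f i = 0" if "0 < i" "i < k" for i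
    using less.IH[of i] that less.prems by simp
  have "d * (cmod (1 ^ n - \<omega> ^ n) * cmod (taylor_coeff f n))
      \<le> d\<^sup>2 - (cmod (1 ^ k - \<omega> ^ k) * cmod (taylor_coeff f k))\<^sup>2"
    by (rule Wiener_inequality_rotation_diff[OF hol osc _ _ \<open>k < n\<close> gap]) (simp_all add: \<omega>_def)
  moreover have "\<omega> ^ n = -1"
    using cis_pi_div_power_self[of n] less.prems by (simp add: \<omega>_def)
  ultimately have "(cmod (1 - \<omega> ^ k) * cmod (taylor_coeff f k))\<^sup>2 \<le> 0"
    using extremal by (simp add: power2_eq_square)
  moreover have "1 - \<omega> ^ k \<noteq> 0"
    using cis_pi_div_power_ne_1[OF less.prems] by (simp add: \<omega>_def)
  ultimately show ?case
    by simp
qed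

lemma taylor_coeff_eq_0_above_if_extremal:
  assumes hol: "f holomorphic_on ball 0 1"
    and osc: "\<And>z w. z \<in> ball 0 1 \<Longrightarrow> w \<in> ball 0 1 \<Longrightarrow> cmod (f z - f w) \<le> d"
    and extremal: "2 * cmod (taylor_coeff f n) = d" and "0 < d" and "1 \<le> n" "n < k"
    and below: "\<And>i. 0 < i \<Longrightarrow> i < n \<Longrightarrow> taylor_coeff f i = 0"
  shows "taylor_coeff f k = 0"
proof -
  define \<omega> where "\<omega> = cis (pi / n)"
  have "cmod (cis (k * \<delta>) - \<omega> ^ k) * cmod (taylor_coeff f k) \<le> (d * n\<^sup>2 / 4) * \<delta>\<^sup>2" for \<delta> :: real
  proof -
    have "d * (cmod (cis \<delta> ^ k - \<omega> ^ k) * cmod (taylor_coeff f k))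
        \<le> d\<^sup>2 - (cmod (cis \<delta> ^ n - \<omega> ^ n) * cmod (taylor_coeff f n))\<^sup>2"
      by (rule Wiener_inequality_rotation_diff[OF hol osc _ _ \<open>n < k\<close> below]) (simp_all add: \<omega>_def)
    also have "\<dots> = d\<^sup>2 * (1 - cos (n * \<delta>)) / 2"
    proof -
      have "cis \<delta> ^ n - \<omega> ^ n = cis (n * \<delta>) + 1"
        using cis_pi_div_power_self[OF \<open>1 \<le> n\<close>] by (simp add: \<omega>_def Complex.DeMoivre)
      then have "(cmod (cis \<delta> ^ n - \<omega> ^ n))\<^sup>2 = 2 + 2 * cos (n * \<delta>)"
        by (simp only: norm_cis_plus_1_squared)
      then show ?thesis
        unfolding extremal[symmetric] by (simp add: power_mult_distrib field_simps)
    qed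
    also have "\<dots> \<le> d\<^sup>2 * ((n * \<delta>)\<^sup>2 / 2) / 2"
      using one_minus_cos_le[of "n * \<delta>"] by (intro divide_right_mono mult_left_mono) auto
    also have "\<dots> = d * (d * n\<^sup>2 / 4 * \<delta>\<^sup>2)"
      by (simp add: power2_eq_square)
    finally show ?thesis
      using \<open>0 < d\<close> by (simp add: Complex.DeMoivre mult_le_cancel_left_pos)
  qed
  then have "cmod (taylor_coeff f k) = 0"
    by (rule eq_0_if_norm_cis_diff_le_square[rotated 2]) (use \<open>n < k\<close> in auto)
  then show ?thesis
    by simp
qed

lemma eq_monomial_if_extremal:
  assumes hol: "f holomorphic_on ball 0 1"
    and osc: "\<And>z w. z \<in> ball 0 1 \<Longrightarrow> w \<in> ball 0 1 \<Longrightarrow> cmod (f z - f w) \<le> d"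
    and "1 \<le> n" and extremal: "2 * cmod (taylor_coeff f n) = d" and z: "z \<in> ball 0 1"
  shows "f z = f 0 + taylor_coeff f n * z ^ n"
proof (cases "d = 0")
  case True
  then show ?thesis
    using osc[OF z, of 0] extremal by simp
next
  case False
  then have "0 < d"
    using extremal by auto
  have below: "taylor_coeff f i = 0" if "0 < i" "i < n" for i
    using taylor_coeff_eq_0_below_if_extremal[OF hol osc extremal \<open>0 < d\<close> that] .
  have above: "taylor_coeff f k = 0" if "n < k" for k
    using taylor_coeff_eq_0_above_if_extremal[OF hol osc extremal \<open>0 < d\<close> \<open>1 \<le> n\<close> that below] .
  show ?thesis
  proof (rule eq_if_taylor_coeff_eq[OF hol _ open_ball connected_ball _ _ z])
    show "(\<lambda>z. f 0 + taylor_coeff f n * z ^ n) holomorphic_on ball 0 1"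
      by (intro holomorphic_intros)
    show "taylor_coeff f k = taylor_coeff (\<lambda>z. f 0 + taylor_coeff f n * z ^ n) k" for k
      using below[of k] above[of k] \<open>1 \<le> n\<close>
      by (cases k n rule: linorder_cases) (auto simp: taylor_coeff_const_plus_monomial)
  qed simp
qed

lemma norm_taylor_coeff_eq_half_oscillation_iff:
  assumes hol: "f holomorphic_on ball 0 1"
    and osc: "\<And>z w. z \<in> ball 0 1 \<Longrightarrow> w \<in> ball 0 1 \<Longrightarrow> cmod (f z - f w) \<le> d"
    and "1 \<le> n"
  shows "cmod (taylor_coeff f n) = d / 2 \<longleftrightarrow>
    (\<exists>c. (\<forall>z\<in>ball 0 1. f z = f 0 + c * z ^ n) \<and> cmod c = d / 2)"
proof
  assume "cmod (taylor_coeff f n) = d / 2"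
  then have extremal: "2 * cmod (taylor_coeff f n) = d"
    by simp
  show "\<exists>c. (\<forall>z\<in>ball 0 1. f z = f 0 + c * z ^ n) \<and> cmod c = d / 2"
  proof (intro exI conjI ballI)
    show "f z = f 0 + taylor_coeff f n * z ^ n" if "z \<in> ball 0 1" for z
      by (rule eq_monomial_if_extremal[OF hol osc \<open>1 \<le> n\<close> extremal that])
  qed (use extremal in simp)
next
  assume "\<exists>c. (\<forall>z\<in>ball 0 1. f z = f 0 + c * z ^ n) \<and> cmod c = d / 2"
  then obtain c where rep: "\<And>z. z \<in> ball 0 1 \<Longrightarrow> f z = f 0 + c * z ^ n"
    and "cmod c = d / 2"
    by blast
  have "taylor_coeff f n = taylor_coeff (\<lambda>z. f 0 + c * z ^ n) n"
    by (rule taylor_coeff_cong[OF hol _ open_ball _ rep]) (auto intro!: holomorphic_intros)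
  with \<open>1 \<le> n\<close> \<open>cmod c = d / 2\<close> show "cmod (taylor_coeff f n) = d / 2"
    by (simp add: taylor_coeff_const_plus_monomial)
qed

lemma norm_diff_le_Diam: "z \<in> E \<Longrightarrow> w \<in> E \<Longrightarrow> ereal (cmod (z - w)) \<le> Diam E"
  unfolding Diam_def by (rule SUP_upper2, assumption, rule SUP_upper)

theorem theorem7:
  fixes f :: "complex \<Rightarrow> complex" and n :: nat
  assumes "f analytic_on ball 0 1" and "n \<ge> 1"
  shows "ereal (cmod ((deriv ^^ n) f 0) / fact n) \<le> Diam (f ` ball 0 1) / 2
       \<and> (ereal (cmod ((deriv ^^ n) f 0) / fact n) = Diam (f ` ball 0 1) / 2 \<longleftrightarrow>
           (\<exists>c. (\<forall>z\<in>ball 0 1. f z = f 0 + c * z ^ n) \<and> ereal (cmod c) = Diam (f ` ball 0 1) / 2))"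
proof -
  have hol: "f holomorphic_on ball 0 1"
    using assms(1) by (simp add: analytic_on_open)
  have lhs: "cmod ((deriv ^^ n) f 0) / fact n = cmod (taylor_coeff f n)"
    by (simp add: taylor_coeff_def norm_divide)
  have "ereal 0 \<le> Diam (f ` ball 0 1)"
    using norm_diff_le_Diam[of "f 0" "f ` ball 0 1" "f 0"] by simp
  then consider "Diam (f ` ball 0 1) = \<infinity>" | d where "Diam (f ` ball 0 1) = ereal d"
    by (cases "Diam (f ` ball 0 1)") auto
  then show ?thesis
  proof cases
    case 1
    then show ?thesis
      by simp
  next
    case (2 d)
    have osc: "cmod (f z - f w) \<le> d" if "z \<in> ball 0 1" "w \<in> ball 0 1" for z w
      using norm_diff_le_Diam[of "f z" "f ` ball 0 1" "f w"] that 2 by simp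
    have "cmod (taylor_coeff f n) = d / 2 \<longleftrightarrow>
        (\<exists>c. (\<forall>z\<in>ball 0 1. f z = f 0 + c * z ^ n) \<and> cmod c = d / 2)"
      by (rule norm_taylor_coeff_eq_half_oscillation_iff[OF hol osc \<open>n \<ge> 1\<close>])
    moreover have "cmod (taylor_coeff f n) \<le> d / 2"
      using norm_taylor_coeff_le_half_oscillation[OF hol osc \<open>n \<ge> 1\<close>] by simp
    moreover have "Diam (f ` ball 0 1) / 2 = ereal (d / 2)"
      using 2 by simp
    ultimately show ?thesis
      unfolding lhs by simp
  qed
qed

end
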